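(* Let $(X_n)_{n\ge0}$ be the Kendall random walk with step distribution $\nu\in\mathcal P_s$, $\nu(\{0\})=0$, let $a\ge0$, and let $\tau^{-}_{a,w}=\min\{n\ge1: X_n\le a\}$ (weak descending ladder epoch, $\min\emptyset=\infty$). Then $\mathbb P(\tau^-_{a,w}=1)=F(a)$ and for every $n\ge0$ $$\mathbb P(\tau^-_{a,w}>n+1)=\frac1{2^n}\big(1-F(a)\big).$$
   Context: Fix $\alpha>0$. $\mathcal P_s$ is the set of symmetric Borel probability measures on $\mathbb R$. For $x\in\mathbb R$, $\widetilde\delta_x=\frac12(\delta_x+\delta_{-x})$. For a probability measure $\lambda=\mathcal L(X)$ and $c>0$, $T_c\lambda=\mathcal L(cX)$, and $T_0\lambda=\delta_0$. $\widetilde\pi_{2\alpha}$ is the symmetric Pareto probability measure with density $\alpha|y|^{-2\alpha-1}\mathbf 1_{\{|y|\ge1\}}$. The Kendall convolution $\vartriangle_\alpha$ on $\mathcal P_s$ is defined by $\widetilde\delta_x\vartriangle_\alpha\widetilde\delta_y=T_M\big(\varrho^\alpha\widetilde\pi_{2\alpha}+(1-\varrho^\alpha)\widetilde\delta_1\big)$ where $M=\max(|x|,|y|)$, $m=\min(|x|,|y|)$, $\varrho=m/M$ (and $\varrho=0$ if $M=0$), extended by $(\nu_1\vartriangle_\alpha\nu_2)(A)=\int\int(\widetilde\delta_x\vartriangle_\alpha\widetilde\delta_y)(A)\,\nu_1(dx)\nu_2(dy)$. For $x\in\mathbb R$ and $\mu\in\mathcal P_s$ we write $\delta_x\vartriangle_\alpha\mu:=\widetilde\delta_x\vartriangle_\alpha\mu$.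 $F(t)=\nu((-\infty,t])$. The Kendall random walk with step distribution $\nu$ is the Markov chain $(X_n)_{n\ge0}$ with $X_0=0$ and transition kernel $\mathbb P(X_{k+1}\in A\mid X_k=x)=(\delta_x\vartriangle_\alpha\nu)(A)$. *)

theory Defs
  imports "HOL-Probability.Probability"
begin

definition sym_prob :: "real measure \<Rightarrow> bool" where
  "sym_prob \<nu> \<longleftrightarrow> prob_space \<nu> \<and> sets \<nu> = sets borel \<and>
     (\<forall>A\<in>sets borel. measure \<nu> (uminus -` A) = measure \<nu> A)"

definition cdf_of :: "real measure \<Rightarrow> real \<Rightarrow> real" where
  "cdf_of \<nu> t = measure \<nu> {..t}"

definition sym_pareto :: "real \<Rightarrow> real measure" where
  "sym_pareto \<alpha> = density lborel
     (\<lambda>y. ennreal (if 1 \<le> \<bar>y\<bar> then \<alpha> * \<bar>y\<bar> powr (- 2 * \<alpha> - 1) else 0))"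

definition dilate :: "real \<Rightarrow> real measure \<Rightarrow> real measure" where
  "dilate c \<mu> = (if c = 0 then return borel 0 else distr \<mu> borel (\<lambda>y. c * y))"

definition sym_delta :: "real \<Rightarrow> real set \<Rightarrow> real" where
  "sym_delta x A = (indicator A x + indicator A (- x)) / 2"

text \<open>(sym_delta x) Kendall-convolved with (sym_delta y), evaluated on a set A:
  T_M (rho^alpha pi + (1 - rho^alpha) sym_delta 1).\<close>
definition kendall_dd :: "real \<Rightarrow> real \<Rightarrow> real \<Rightarrow> real set \<Rightarrow> real" where
  "kendall_dd \<alpha> x y A =
     (let M = max \<bar>x\<bar> \<bar>y\<bar>; m = min \<bar>x\<bar> \<bar>y\<bar>; \<rho> = (if M = 0 then 0 else m / M) in
      if M = 0 then indicator A 0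
      else \<rho> powr \<alpha> * measure (dilate M (sym_pareto \<alpha>)) A
           + (1 - \<rho> powr \<alpha>) * sym_delta M A)"

text \<open>(delta_x Kendall-convolved with nu)(A) := (sym_delta x Kendall-convolved with nu)(A),
  obtained by integrating kendall_dd against sym_delta x (du) and nu (dy).\<close>
definition kendall_kernel :: "real \<Rightarrow> real measure \<Rightarrow> real \<Rightarrow> real set \<Rightarrow> real" where
  "kendall_kernel \<alpha> \<nu> x A =
     (\<integral>y. (kendall_dd \<alpha> x y A + kendall_dd \<alpha> (- x) y A) / 2 \<partial>\<nu>)"

text \<open>X is a Kendall random walk on the probability space M with step distribution nu:
  a Markov chain started at 0 with transition kernel (delta_x Kendall-convolved with nu),
  characterised through its finite-dimensional distributions.\<close>
definition kendall_rw :: "real \<Rightarrow> real measure \<Rightarrow> 'a measure \<Rightarrow> (nat \<Rightarrow> 'a \<Rightarrow> real) \<Rightarrow> bool" where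
  "kendall_rw \<alpha> \<nu> M X \<longleftrightarrow>
     prob_space M \<and> (\<forall>n. X n \<in> borel_measurable M) \<and> (\<forall>\<omega>\<in>space M. X 0 \<omega> = 0) \<and>
     (\<forall>n A B. (\<forall>i\<le>n. A i \<in> sets borel) \<longrightarrow> B \<in> sets borel \<longrightarrow>
        measure M {\<omega>\<in>space M. (\<forall>i\<le>n. X i \<omega> \<in> A i) \<and> X (Suc n) \<omega> \<in> B}
        = (\<integral>\<omega>. indicator {\<omega>\<in>space M. \<forall>i\<le>n. X i \<omega> \<in> A i} \<omega>
                 * kendall_kernel \<alpha> \<nu> (X n \<omega>) B \<partial>M))"

definition weak_ladder :: "real \<Rightarrow> (nat \<Rightarrow> 'a \<Rightarrow> real) \<Rightarrow> 'a \<Rightarrow> enat" where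
  "weak_ladder a X \<omega> =
     (if \<exists>n\<ge>1. X n \<omega> \<le> a then enat (LEAST n. n \<ge> 1 \<and> X n \<omega> \<le> a) else \<infinity>)"

end

theory Submission
  imports Defs
begin

text \<open>The walk stays above a for the first n steps exactly on {\<tau> > n}, and by the Markov
  property the probability of surviving one more step is the integral of the one-step kernel
  mass of {a<..} over that event. From 0 this mass is 1 - F(a) by symmetry of \<nu>. From any x
  with |x| > a it is 1/2: the Kendall convolution of the symmetrized Dirac masses at x and y is
  a mixture of the dilated Pareto law T_M \<pi> and the symmetrized Dirac mass at M, with
  M \<ge> |x| > a, and both put mass 1/2 on {a<..} because each lives on {|y| \<ge> M}. So the
  survival probability halves at every step.\<close>

lemma emeasure_sym_pareto_greaterThan:
  assumes "\<alpha> > 0" "0 \<le> c" "c < 1"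
  shows "emeasure (sym_pareto \<alpha>) {c<..} = ennreal (1/2)"
proof -
  have restrict: "ennreal (if 1 \<le> \<bar>y\<bar> then \<alpha> * \<bar>y\<bar> powr (- 2 * \<alpha> - 1) else 0) * indicator {c<..} y
      = ennreal (if 1 \<le> y then \<alpha> * y powr (- 2 * \<alpha> - 1) else 0) * indicator {1..} y" for y
    using assms by (auto simp: indicator_def)
  have "emeasure (sym_pareto \<alpha>) {c<..}
      = (\<integral>\<^sup>+y. ennreal (if 1 \<le> y then \<alpha> * y powr (- 2 * \<alpha> - 1) else 0) * indicator {1..} y \<partial>lborel)"
    unfolding sym_pareto_def by (subst emeasure_density) (auto simp: restrict)
  also have "\<dots> = ennreal (0 - (- (1/2) * 1 powr (-2*\<alpha>)))"
  proof (rule nn_integral_FTC_atLeast[where F="\<lambda>y. - (1/2) * y powr (-2*\<alpha>)" and T=0])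
    fix x :: real assume "1 \<le> x"
    then show "((\<lambda>y. - (1/2) * y powr (-2*\<alpha>)) has_real_derivative
        (if 1 \<le> x then \<alpha> * x powr (- 2 * \<alpha> - 1) else 0)) (at x)"
      using assms by (auto intro!: derivative_eq_intros simp: field_simps)
  next
    show "((\<lambda>y. - (1/2) * y powr (-2*\<alpha>)) \<longlongrightarrow> 0) at_top"
      using assms by (intro tendsto_mult_right_zero tendsto_neg_powr) (auto simp: filterlim_ident)
  qed (use assms in auto)
  finally show ?thesis by simp
qed

lemma measure_dilate_sym_pareto_greaterThan:
  assumes "\<alpha> > 0" "0 \<le> a" "a < m"
  shows "measure (dilate m (sym_pareto \<alpha>)) {a<..} = 1/2"
proof -
  have "(\<lambda>y. m * y) -` {a<..} = {a/m<..}"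
    using assms by (auto simp: field_simps)
  then have "emeasure (dilate m (sym_pareto \<alpha>)) {a<..} = emeasure (sym_pareto \<alpha>) {a/m<..}"
    using assms unfolding dilate_def by (simp add: emeasure_distr sym_pareto_def)
  also have "\<dots> = ennreal (1/2)"
    using assms by (intro emeasure_sym_pareto_greaterThan) auto
  finally show ?thesis by (simp add: measure_def del: ennreal_half)
qed

lemma kendall_dd_greaterThan:
  assumes "\<alpha> > 0" "0 \<le> a" "a < \<bar>x\<bar>"
  shows "kendall_dd \<alpha> x y {a<..} = 1/2"
proof -
  define m where "m = max \<bar>x\<bar> \<bar>y\<bar>"
  have "a < m" using assms by (auto simp: m_def)
  then have "measure (dilate m (sym_pareto \<alpha>)) {a<..} = 1/2" and "sym_delta m {a<..} = 1/2"
    using assms by (simp_all add: measure_dilate_sym_pareto_greaterThan sym_delta_def)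
  then show ?thesis
    using \<open>a < m\<close> assms(2) unfolding kendall_dd_def Let_def m_def[symmetric]
    by (simp add: algebra_simps)
qed

lemma kendall_kernel_greaterThan:
  assumes "\<alpha> > 0" "0 \<le> a" "a < \<bar>x\<bar>" "prob_space \<nu>"
  shows "kendall_kernel \<alpha> \<nu> x {a<..} = 1/2"
proof -
  have "kendall_kernel \<alpha> \<nu> x {a<..} = (\<integral>y. 1/2 \<partial>\<nu>)"
    unfolding kendall_kernel_def using assms by (simp add: kendall_dd_greaterThan)
  then show ?thesis using prob_space.prob_space[OF assms(4)] by simp
qed

lemma kendall_kernel_zero_greaterThan:
  assumes "0 \<le> a" "sym_prob \<nu>"
  shows "kendall_kernel \<alpha> \<nu> 0 {a<..} = 1 - cdf_of \<nu> a"
proof -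
  have ps: "prob_space \<nu>" and sb: "sets \<nu> = sets borel"
    and sym: "\<And>A. A \<in> sets borel \<Longrightarrow> measure \<nu> (uminus -` A) = measure \<nu> A"
    using assms(2) by (auto simp: sym_prob_def)
  interpret prob_space \<nu> by (fact ps)
  have sp: "space \<nu> = UNIV" using sets_eq_imp_space_eq[OF sb] by simp
  have "kendall_kernel \<alpha> \<nu> 0 {a<..} = (\<integral>y. indicator ({a<..} \<union> {..< -a}) y / 2 \<partial>\<nu>)"
    unfolding kendall_kernel_def
    by (intro Bochner_Integration.integral_cong)
       (use assms in \<open>auto simp: kendall_dd_def Let_def sym_delta_def indicator_def\<close>)
  also have "\<dots> = prob ({a<..} \<union> {..< -a}) / 2"
    using sb sp by simp
  also have "prob ({a<..} \<union> {..< -a}) = prob {a<..} + prob {..< -a}"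
    using assms sb by (intro finite_measure_Union) auto
  also have "prob {..< -a} = prob {a<..}"
  proof -
    have "uminus -` {a<..} = {..< -a}" by auto
    then show ?thesis using sym[of "{a<..}"] by simp
  qed
  also have "prob {a<..} = 1 - cdf_of \<nu> a"
    using prob_compl[of "{..a}"] sb sp unfolding cdf_of_def
    by (simp add: Compl_eq_Diff_UNIV[symmetric])
  finally show ?thesis by simp
qed

lemma enat_less_weak_ladder_iff:
  "enat n < weak_ladder a X \<omega> \<longleftrightarrow> (\<forall>i\<in>{1..n}. a < X i \<omega>)"
proof (cases "\<exists>k\<ge>1. X k \<omega> \<le> a")
  case True
  define L where "L = (LEAST k. k \<ge> 1 \<and> X k \<omega> \<le> a)"
  have L: "L \<ge> 1" "X L \<omega> \<le> a"
    using LeastI_ex[OF True] by (simp_all add: L_def)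
  have below_L: "a < X i \<omega>" if "1 \<le> i" "i < L" for i
    using not_less_Least[of i "\<lambda>k. k \<ge> 1 \<and> X k \<omega> \<le> a"] that by (simp add: L_def)
  have "n < L \<longleftrightarrow> (\<forall>i\<in>{1..n}. a < X i \<omega>)"
  proof
    show "n < L \<Longrightarrow> \<forall>i\<in>{1..n}. a < X i \<omega>" using below_L by simp
    show "\<forall>i\<in>{1..n}. a < X i \<omega> \<Longrightarrow> n < L" using L by (meson atLeastAtMost_iff not_le not_less)
  qed
  with True show ?thesis by (simp add: weak_ladder_def L_def)
next
  case False
  then have "weak_ladder a X \<omega> = \<infinity>" by (simp add: weak_ladder_def)
  moreover have "a < X i \<omega>" if "1 \<le> i" for i
    using False that not_le by blast
  ultimately show ?thesis by simp
qed

lemma one_le_weak_ladder: "1 \<le> weak_ladder a X \<omega>"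
  using enat_less_weak_ladder_iff[of 0 a X \<omega>] by (simp add: one_enat_def Suc_ile_eq del: enat_0)

lemma weak_ladder_eq_1_iff: "weak_ladder a X \<omega> = 1 \<longleftrightarrow> \<not> enat 1 < weak_ladder a X \<omega>"
  using one_le_weak_ladder[of a X \<omega>] by (auto simp: one_enat_def)

definition stays_above :: "real \<Rightarrow> 'a measure \<Rightarrow> (nat \<Rightarrow> 'a \<Rightarrow> real) \<Rightarrow> nat \<Rightarrow> 'a set" where
  "stays_above a M X n = {\<omega>\<in>space M. \<forall>i\<in>{1..n}. a < X i \<omega>}"

lemma stays_above_eq_weak_ladder:
  "stays_above a M X n = {\<omega>\<in>space M. enat n < weak_ladder a X \<omega>}"
  by (simp add: stays_above_def enat_less_weak_ladder_iff)

lemma sets_stays_above: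
  assumes "\<And>i. X i \<in> borel_measurable M"
  shows "stays_above a M X n \<in> sets M"
  unfolding stays_above_def using assms by measurable

lemma kendall_rw_stays_above_Suc:
  assumes "kendall_rw \<alpha> \<nu> M X"
  shows "measure M (stays_above a M X (Suc n))
    = (\<integral>\<omega>. indicator (stays_above a M X n) \<omega> * kendall_kernel \<alpha> \<nu> (X n \<omega>) {a<..} \<partial>M)"
proof -
  define A :: "nat \<Rightarrow> real set" where "A i = (if i = 0 then UNIV else {a<..})" for i
  have markov: "\<And>m C B. (\<forall>i\<le>m. C i \<in> sets borel) \<Longrightarrow> B \<in> sets borel \<Longrightarrow>
      measure M {\<omega>\<in>space M. (\<forall>i\<le>m. X i \<omega> \<in> C i) \<and> X (Suc m) \<omega> \<in> B}
      = (\<integral>\<omega>. indicator {\<omega>\<in>space M. \<forall>i\<le>m. X i \<omega> \<in> C i} \<omega> * kendall_kernel \<alpha> \<nu> (X m \<omega>) B \<partial>M)"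
    using assms by (simp add: kendall_rw_def)
  have below: "stays_above a M X n = {\<omega>\<in>space M. \<forall>i\<le>n. X i \<omega> \<in> A i}"
    by (auto simp: stays_above_def A_def)
  have step: "stays_above a M X (Suc n)
      = {\<omega>\<in>space M. (\<forall>i\<le>n. X i \<omega> \<in> A i) \<and> X (Suc n) \<omega> \<in> {a<..}}"
    by (auto simp: stays_above_def A_def le_Suc_eq)
  show ?thesis
    unfolding below step by (rule markov) (simp_all add: A_def)
qed

lemma kendall_rw_stays_above_one:
  assumes "kendall_rw \<alpha> \<nu> M X" "sym_prob \<nu>" "0 \<le> a"
  shows "measure M (stays_above a M X 1) = 1 - cdf_of \<nu> a"
proof -
  have X0: "\<And>\<omega>. \<omega> \<in> space M \<Longrightarrow> X 0 \<omega> = 0"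
    using assms(1) by (simp add: kendall_rw_def)
  interpret prob_space M
    using assms(1) by (simp add: kendall_rw_def)
  have "measure M (stays_above a M X 1) = (\<integral>\<omega>. 1 - cdf_of \<nu> a \<partial>M)"
    using kendall_rw_stays_above_Suc[OF assms(1), of a 0]
    by (simp add: stays_above_def X0 kendall_kernel_zero_greaterThan assms(2,3)
        cong: Bochner_Integration.integral_cong)
  then show ?thesis by (simp add: prob_space)
qed

lemma kendall_rw_stays_above_Suc_Suc:
  assumes "kendall_rw \<alpha> \<nu> M X" "\<alpha> > 0" "sym_prob \<nu>" "0 \<le> a"
  shows "measure M (stays_above a M X (Suc (Suc n))) = measure M (stays_above a M X (Suc n)) / 2"
proof -
  let ?S = "stays_above a M X (Suc n)"
  have "prob_space \<nu>" using assms(3) by (simp add: sym_prob_def)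
  have kernel: "indicator ?S \<omega> * kendall_kernel \<alpha> \<nu> (X (Suc n) \<omega>) {a<..} = indicator ?S \<omega> / 2" for \<omega>
  proof (cases "\<omega> \<in> ?S")
    case True
    then have "a < \<bar>X (Suc n) \<omega>\<bar>" by (force simp: stays_above_def)
    then show ?thesis
      using assms \<open>prob_space \<nu>\<close> by (simp add: kendall_kernel_greaterThan)
  qed simp
  have "?S \<in> sets M"
    using assms(1) by (intro sets_stays_above) (simp add: kendall_rw_def)
  then show ?thesis
    by (simp add: kendall_rw_stays_above_Suc[OF assms(1)] kernel)
qed

theorem lemma8:
  fixes \<alpha> a :: real and \<nu> :: "real measure" and M :: "'a measure" and X :: "nat \<Rightarrow> 'a \<Rightarrow> real"
  assumes "\<alpha> > 0"
    and "sym_prob \<nu>"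
    and "measure \<nu> {0} = 0"
    and "a \<ge> 0"
    and "kendall_rw \<alpha> \<nu> M X"
  shows "measure M {\<omega>\<in>space M. weak_ladder a X \<omega> = 1} = cdf_of \<nu> a \<and>
    (\<forall>n::nat. measure M {\<omega>\<in>space M. weak_ladder a X \<omega> > enat (n + 1)}
                 = (1 / 2 ^ n) * (1 - cdf_of \<nu> a))"
proof -
  interpret prob_space M
    using assms(5) by (simp add: kendall_rw_def)
  let ?S = "stays_above a M X"
  have survival: "measure M (?S (Suc n)) = (1 / 2 ^ n) * (1 - cdf_of \<nu> a)" for n
  proof (induction n)
    case 0
    show ?case using kendall_rw_stays_above_one[OF assms(5,2,4)] by simp
  next
    case (Suc n)
    then show ?case by (simp add: kendall_rw_stays_above_Suc_Suc[OF assms(5,1,2,4)])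
  qed
  have "{\<omega>\<in>space M. weak_ladder a X \<omega> = 1} = space M - ?S 1"
    by (auto simp: stays_above_eq_weak_ladder weak_ladder_eq_1_iff)
  moreover have "?S 1 \<in> events"
    using assms(5) by (intro sets_stays_above) (simp add: kendall_rw_def)
  ultimately have "measure M {\<omega>\<in>space M. weak_ladder a X \<omega> = 1} = cdf_of \<nu> a"
    using survival[of 0] by (simp add: prob_compl)
  moreover have "{\<omega>\<in>space M. weak_ladder a X \<omega> > enat (n + 1)} = ?S (Suc n)" for n
    by (simp add: stays_above_eq_weak_ladder)
  ultimately show ?thesis
    using survival by simp
qed

end
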